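(* Let $n\ge 1$ and for sections $X_1,\dots,X_h$ define \[ \mu_n(X_1,\dots,X_h)=\sum_{(a_1,\dots,a_h)} \mu\big([\pi^{a_1}]_{\mathscr{F}^{\mathrm{univ}}}(X_1),\dots,[\pi^{a_h}]_{\mathscr{F}^{\mathrm{univ}}}(X_h)\big), \] the sum over integer tuples with $0\le a_i\le n-1$ and $\sum_i a_i=(h-1)(n-1)$ (so that $\mu_0$ is the empty sum $0$). Then for sections $X_1,\dots,X_h$ of $\mathscr{F}^{\mathrm{univ}}[\pi^n]$ over an $\mathcal{A}$-algebra $R$ we have \[ [\pi]_{\mathrm{LT}}(\mu_n(X_1,\dots,X_h)) = \mu_{n-1}\big([\pi]_{\mathscr{F}^{\mathrm{univ}}}(X_1),\dots,[\pi]_{\mathscr{F}^{\mathrm{univ}}}(X_h)\big). \] In particular $\mu_n(X_1,\dots,X_h)$ is a section of $\mathrm{LT}[\pi^n]$.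
   Context: $F=k((\pi))$, $k=\mathbf{F}_q$, $\mathcal{O}_F=k[[\pi]]$, $h\ge1$, $\mathcal{A}=\bar k[[\pi]][[u_1,\dots,u_{h-1}]]$. $\mathscr{F}^{\mathrm{univ}}$ over $\mathcal{A}$ has additive law, $[\zeta](X)=\zeta X$ ($\zeta\in k$), $[\pi](X)=\pi X+u_1X^q+\dots+u_{h-1}X^{q^{h-1}}+X^{q^h}$, and $[\pi^a]$ is the $a$-fold iterate. $\mathrm{LT}$ has additive law, $[\zeta](X)=\zeta X$, $[\pi](X)=\pi X+(-1)^{h-1}X^q$. A section of $G[\pi^n]$ over $R$ is an $s\in R$ with $[\pi^n]_G(s)=0$. $\mu(X_1,\dots,X_h)=\det(X_i^{q^j})_{1\le i\le h,0\le j\le h-1}$ is the Moore determinant. *)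

theory Defs
  imports "Jordan_Normal_Form.Determinant"
begin

text \<open>Parameters: h (height), q (size of the residue field k = F_q), and the images
  in the algebra R of the elements pe and u_1, ..., u_(h-1) of the ring A
  (u is indexed by 1..h-1; other values of u are irrelevant).\<close>

text \<open>[pe] for the universal formal O_F-module F^univ (additive group law).\<close>
definition univ_pi :: "nat \<Rightarrow> nat \<Rightarrow> 'a::comm_ring_1 \<Rightarrow> (nat \<Rightarrow> 'a) \<Rightarrow> 'a \<Rightarrow> 'a" where
  "univ_pi h q pe u X = pe * X + (\<Sum>j\<in>{1..<h}. u j * X ^ (q ^ j)) + X ^ (q ^ h)"

definition univ_pi_pow :: "nat \<Rightarrow> nat \<Rightarrow> 'a::comm_ring_1 \<Rightarrow> (nat \<Rightarrow> 'a) \<Rightarrow> nat \<Rightarrow> 'a \<Rightarrow> 'a" where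
  "univ_pi_pow h q pe u a = (univ_pi h q pe u) ^^ a"

text \<open>[pe] for the Lubin-Tate module LT (additive group law).\<close>
definition lt_pi :: "nat \<Rightarrow> nat \<Rightarrow> 'a::comm_ring_1 \<Rightarrow> 'a \<Rightarrow> 'a" where
  "lt_pi h q pe X = pe * X + (-1) ^ (h - 1) * X ^ q"

definition lt_pi_pow :: "nat \<Rightarrow> nat \<Rightarrow> 'a::comm_ring_1 \<Rightarrow> nat \<Rightarrow> 'a \<Rightarrow> 'a" where
  "lt_pi_pow h q pe a = (lt_pi h q pe) ^^ a"

text \<open>Moore determinant mu(X_1,...,X_h) = det (X_i^(q^j)), rows i = 1..h (indexed 0..h-1),
  columns j = 0..h-1.\<close>
definition moore :: "nat \<Rightarrow> nat \<Rightarrow> (nat \<Rightarrow> 'a::comm_ring_1) \<Rightarrow> 'a" where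
  "moore h q X = det (mat h h (\<lambda>(i, j). X i ^ (q ^ j)))"

definition mu_tuples :: "nat \<Rightarrow> nat \<Rightarrow> (nat \<Rightarrow> nat) set" where
  "mu_tuples h n = {a. (\<forall>i<h. a i < n) \<and> (\<forall>i\<ge>h. a i = 0) \<and>
                        (\<Sum>i<h. a i) = (h - 1) * (n - 1)}"

definition mu_n :: "nat \<Rightarrow> nat \<Rightarrow> 'a::comm_ring_1 \<Rightarrow> (nat \<Rightarrow> 'a) \<Rightarrow> nat \<Rightarrow> (nat \<Rightarrow> 'a) \<Rightarrow> 'a" where
  "mu_n h q pe u n X =
     (\<Sum>a\<in>mu_tuples h n. moore h q (\<lambda>i. univ_pi_pow h q pe u (a i) (X i)))"

end

theory Submission
  imports Defs "HOL-Computational_Algebra.Primes"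
begin

text \<open>Expanding the Moore determinant along its first column gives
  \<open>\<mu>(Y) = \<Sum>\<^sub>i Y\<^sub>i c\<^sub>i(Y)\<close>, where the signed minors \<open>c\<^sub>i(Y)\<close> involve only the powers
  \<open>Y\<^sub>k ^ q ^ j\<close> with \<open>k \<noteq> i\<close> and \<open>1 \<le> j < h\<close>. In characteristic \<open>p\<close> the map \<open>x \<mapsto> x ^ q\<close> is a
  ring endomorphism, so \<open>\<mu>(Y) ^ q\<close> is the Moore determinant with exponents shifted by one,
  and expanding it along its last column gives \<open>(-1) ^ (h - 1) \<Sum>\<^sub>i Y\<^sub>i ^ q ^ h c\<^sub>i(Y)\<close>.
  The sums \<open>\<Sum>\<^sub>i Y\<^sub>i ^ q ^ j c\<^sub>i(Y)\<close> for \<open>1 \<le> j < h\<close> are determinants with two equal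
  columns, hence \<open>[\<pi>]\<^sub>L\<^sub>T(\<mu>(Y)) = \<Sum>\<^sub>i [\<pi>](Y\<^sub>i) c\<^sub>i(Y)\<close>.

  For \<open>Y\<^sub>k = [\<pi> ^ a\<^sub>k](X\<^sub>k)\<close>, the terms with \<open>a\<^sub>i = n - 1\<close> vanish since \<open>[\<pi> ^ n](X\<^sub>i) = 0\<close>.
  If \<open>a\<^sub>i < n - 1\<close>, the sum condition forces \<open>a\<^sub>k \<ge> 1\<close> for all \<open>k \<noteq> i\<close>, and lowering these
  coordinates by one is a bijection onto the tuples for \<open>n - 1\<close>. As \<open>c\<^sub>i\<close> does not
  involve \<open>Y\<^sub>i\<close>, the \<open>i\<close>-th summand turns into that of \<open>\<mu>\<^sub>n\<^sub>-\<^sub>1([\<pi>](X))\<close>. Iterating down to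
  \<open>\<mu>\<^sub>0 = 0\<close> gives the torsion statement.\<close>

section \<open>Cofactor expansion of Moore determinants\<close>

definition moore_with_first_column :: "nat \<Rightarrow> nat \<Rightarrow> (nat \<Rightarrow> 'a::comm_ring_1) \<Rightarrow> (nat \<Rightarrow> 'a) \<Rightarrow> 'a" where
  "moore_with_first_column h q Z Y = det (mat h h (\<lambda>(i, j). if j = 0 then Z i else Y i ^ q ^ j))"

definition moore_minor :: "nat \<Rightarrow> nat \<Rightarrow> nat \<Rightarrow> (nat \<Rightarrow> 'a::comm_ring_1) \<Rightarrow> 'a" where
  "moore_minor h q i Y = det (mat (h - 1) (h - 1) (\<lambda>(k, j). Y (insert_index i k) ^ q ^ Suc j))"

lemma moore_eq_moore_with_first_column: "moore h q Y = moore_with_first_column h q Y Y"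
  unfolding moore_def moore_with_first_column_def
  by (rule arg_cong[of _ _ det], rule eq_matI) auto

lemma moore_with_first_column_expansion:
  assumes "h \<ge> 1"
  shows "moore_with_first_column h q Z Y = (\<Sum>i<h. Z i * ((-1) ^ i * moore_minor h q i Y))"
proof -
  let ?A = "mat h h (\<lambda>(i, j). if j = 0 then Z i else Y i ^ q ^ j)"
  have "moore_with_first_column h q Z Y = (\<Sum>i<h. ?A $$ (i, 0) * cofactor ?A i 0)"
    unfolding moore_with_first_column_def
    by (rule laplace_expansion_column) (use assms in auto)
  also have "\<dots> = (\<Sum>i<h. Z i * ((-1) ^ i * moore_minor h q i Y))"
  proof (rule sum.cong[OF refl])
    fix i assume i: "i \<in> {..<h}"
    have "mat_delete ?A i 0 = mat (h - 1) (h - 1) (\<lambda>(k, j). Y (insert_index i k) ^ q ^ Suc j)"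
      by (rule eq_matI) (use i in \<open>auto simp: mat_delete_def insert_index_def\<close>)
    then show "?A $$ (i, 0) * cofactor ?A i 0 = Z i * ((-1) ^ i * moore_minor h q i Y)"
      using i by (simp add: cofactor_def moore_minor_def)
  qed
  finally show ?thesis .
qed

lemma moore_with_first_column_power_eq_0:
  assumes "1 \<le> j" "j < h"
  shows "moore_with_first_column h q (\<lambda>i. Y i ^ q ^ j) Y = 0"
  unfolding moore_with_first_column_def
  by (rule det_identical_columns[of _ h 0 j]) (use assms in \<open>auto simp: col_def\<close>)

lemma moore_minor_cong:
  assumes "i < h" "\<And>k. k < h \<Longrightarrow> k \<noteq> i \<Longrightarrow> Y k = Y' k"
  shows "moore_minor h q i Y = moore_minor h q i Y'"
  unfolding moore_minor_def
  by (rule arg_cong[of _ _ det], rule eq_matI) (use assms in \<open>auto simp: insert_index_def\<close>)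

lemma det_shifted_moore:
  assumes "h \<ge> 1"
  shows "det (mat h h (\<lambda>(i, j). Y i ^ q ^ Suc j))
           = (-1) ^ (h - 1) * moore_with_first_column h q (\<lambda>i. Y i ^ q ^ h) Y"
proof -
  let ?M = "mat h h (\<lambda>(i, j). Y i ^ q ^ Suc j)"
  have "det ?M = (\<Sum>i<h. ?M $$ (i, h - 1) * cofactor ?M i (h - 1))"
    by (rule laplace_expansion_column) (use assms in auto)
  also have "\<dots> = (\<Sum>i<h. (-1) ^ (h - 1) * (Y i ^ q ^ h * ((-1) ^ i * moore_minor h q i Y)))"
  proof (rule sum.cong[OF refl])
    fix i assume i: "i \<in> {..<h}"
    have "mat_delete ?M i (h - 1) = mat (h - 1) (h - 1) (\<lambda>(k, j). Y (insert_index i k) ^ q ^ Suc j)"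
      by (rule eq_matI) (use i in \<open>auto simp: mat_delete_def insert_index_def\<close>)
    moreover have "?M $$ (i, h - 1) = Y i ^ q ^ h"
      using i assms by (simp del: power_Suc add: Suc_diff_1)
    ultimately show "?M $$ (i, h - 1) * cofactor ?M i (h - 1)
        = (-1) ^ (h - 1) * (Y i ^ q ^ h * ((-1) ^ i * moore_minor h q i Y))"
      unfolding cofactor_def moore_minor_def by (simp add: power_add mult_ac)
  qed
  finally show ?thesis
    by (simp add: moore_with_first_column_expansion[OF assms] sum_distrib_left)
qed

section \<open>The Lubin--Tate endomorphism on Moore determinants\<close>

lemma comm_ring_hom_frobenius_power:
  assumes "prime CHAR('a::comm_ring_1)" "q = CHAR('a) ^ f"
  shows "comm_ring_hom (\<lambda>x::'a. x ^ q)"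
proof -
  have "q > 0" using assms prime_gt_0_nat by simp
  then show ?thesis
    by unfold_locales (auto simp: power_0_left power_mult_distrib freshmans_dream'[OF assms])
qed

lemma moore_power_char:
  fixes Y :: "nat \<Rightarrow> 'a::comm_ring_1"
  assumes "prime CHAR('a)" "q = CHAR('a) ^ f" "h \<ge> 1"
  shows "moore h q Y ^ q = (-1) ^ (h - 1) * moore_with_first_column h q (\<lambda>i. Y i ^ q ^ h) Y"
proof -
  interpret frobenius: comm_ring_hom "\<lambda>x::'a. x ^ q"
    by (rule comm_ring_hom_frobenius_power[OF assms(1,2)])
  have "moore h q Y ^ q = det (map_mat (\<lambda>x. x ^ q) (mat h h (\<lambda>(i, j). Y i ^ q ^ j)))"
    unfolding moore_def by simp
  also have "map_mat (\<lambda>x. x ^ q) (mat h h (\<lambda>(i, j). Y i ^ q ^ j)) = mat h h (\<lambda>(i, j). Y i ^ q ^ Suc j)"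
    by (rule eq_matI) (auto simp: power_mult[symmetric] mult.commute)
  also have "det (mat h h (\<lambda>(i, j). Y i ^ q ^ Suc j))
      = (-1) ^ (h - 1) * moore_with_first_column h q (\<lambda>i. Y i ^ q ^ h) Y"
    by (rule det_shifted_moore[OF assms(3)])
  finally show ?thesis .
qed

lemma lt_pi_sum:
  fixes g :: "'b \<Rightarrow> 'a::comm_ring_1"
  assumes "prime CHAR('a)" "q = CHAR('a) ^ f"
  shows "lt_pi h q pe (sum g A) = (\<Sum>a\<in>A. lt_pi h q pe (g a))"
  unfolding lt_pi_def freshmans_dream_sum'[OF assms]
  by (simp add: sum.distrib sum_distrib_left)

lemma lt_pi_moore:
  fixes Y :: "nat \<Rightarrow> 'a::comm_ring_1"
  assumes "prime CHAR('a)" "q = CHAR('a) ^ f" "h \<ge> 1"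
  shows "lt_pi h q pe (moore h q Y) = moore_with_first_column h q (\<lambda>i. univ_pi h q pe u (Y i)) Y"
proof -
  let ?G = "\<lambda>Z. moore_with_first_column h q Z Y"
  let ?c = "\<lambda>i. (-1) ^ i * moore_minor h q i Y"
  have "?G (\<lambda>i. univ_pi h q pe u (Y i))
      = (\<Sum>i<h. pe * (Y i * ?c i) + (\<Sum>j\<in>{1..<h}. u j * (Y i ^ q ^ j * ?c i)) + Y i ^ q ^ h * ?c i)"
    unfolding moore_with_first_column_expansion[OF assms(3)] univ_pi_def
    by (simp add: algebra_simps sum_distrib_left sum_distrib_right)
  also have "\<dots> = pe * (\<Sum>i<h. Y i * ?c i) + (\<Sum>j\<in>{1..<h}. u j * (\<Sum>i<h. Y i ^ q ^ j * ?c i))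
      + (\<Sum>i<h. Y i ^ q ^ h * ?c i)"
    by (simp add: sum.distrib sum_distrib_left, rule sum.swap)
  finally have linear: "?G (\<lambda>i. univ_pi h q pe u (Y i))
      = pe * ?G Y + (\<Sum>j\<in>{1..<h}. u j * ?G (\<lambda>i. Y i ^ q ^ j)) + ?G (\<lambda>i. Y i ^ q ^ h)"
    unfolding moore_with_first_column_expansion[OF assms(3)] .
  have "(\<Sum>j\<in>{1..<h}. u j * ?G (\<lambda>i. Y i ^ q ^ j)) = 0"
    by (rule sum.neutral) (auto simp: moore_with_first_column_power_eq_0)
  moreover have "(-1::'a) ^ (h - 1) * (-1) ^ (h - 1) = 1"
    by (simp flip: power_mult_distrib)
  ultimately show ?thesis
    unfolding lt_pi_def moore_power_char[OF assms] linear moore_eq_moore_with_first_column[symmetric]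
    by (simp flip: mult.assoc)
qed

section \<open>Reindexing the tuples\<close>

lemma mem_mu_tuples_iff:
  "a \<in> mu_tuples h n \<longleftrightarrow>
     (\<forall>i<h. a i < n) \<and> (\<forall>i\<ge>h. a i = 0) \<and> (\<Sum>i<h. a i) = (h - 1) * (n - 1)"
  unfolding mu_tuples_def by simp

lemma finite_mu_tuples: "finite (mu_tuples h n)"
proof (rule finite_subset)
  show "mu_tuples h n \<subseteq> {a. \<forall>x. (x \<in> {..<h} \<longrightarrow> a x \<in> {..<n}) \<and> (x \<notin> {..<h} \<longrightarrow> a x = 0)}"
    unfolding mu_tuples_def by auto
qed (rule finite_set_of_finite_funs, auto)

lemma mu_tuples_0:
  assumes "h \<ge> 1"
  shows "mu_tuples h 0 = {}"
  using assms unfolding mu_tuples_def by (auto dest: spec[of _ 0])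

definition incr_except :: "nat \<Rightarrow> nat \<Rightarrow> (nat \<Rightarrow> nat) \<Rightarrow> nat \<Rightarrow> nat" where
  "incr_except h i b k = (if k < h \<and> k \<noteq> i then b k + 1 else b k)"

lemma inj_incr_except: "inj (incr_except h i)"
  by (rule injI, rule ext) (metis incr_except_def add_right_cancel)

lemma sum_incr_except:
  assumes "i < h"
  shows "(\<Sum>k<h. incr_except h i b k) = (\<Sum>k<h. b k) + (h - 1)"
proof -
  have "(\<Sum>k<h. incr_except h i b k) = (\<Sum>k<h. b k) + (\<Sum>k<h. if k = i then 0 else 1)"
    by (auto simp: incr_except_def simp flip: sum.distrib intro!: sum.cong)
  also have "(\<Sum>k<h. if k = i then 0 else 1 :: nat) = card ({..<h} - {i})"
    by (simp add: sum.If_cases Diff_eq Int_commute)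
  finally show ?thesis using assms by simp
qed

text \<open>If \<open>a\<^sub>k = 0\<close>, the coordinates other than \<open>i, k\<close> contribute at most \<open>(h - 2)(n - 1)\<close>,
  which together with \<open>a\<^sub>i < n - 1\<close> falls short of \<open>(h - 1)(n - 1)\<close>.\<close>

lemma mu_tuples_other_coords_pos:
  assumes a: "a \<in> mu_tuples h n" and i: "i < h" "a i < n - 1" and k: "k < h" "k \<noteq> i"
  shows "a k \<ge> 1"
proof (rule ccontr)
  assume "\<not> a k \<ge> 1"
  then have ak: "a k = 0" by simp
  from a have bound: "\<forall>j<h. a j < n" and sum_a: "(\<Sum>j<h. a j) = (h - 1) * (n - 1)"
    by (auto simp: mem_mu_tuples_iff)
  define c where "c j = a j + (if j = i then 1 else 0) + (if j = k then n - 1 else 0)" for j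
  have "\<And>j. j \<in> {..<h} \<Longrightarrow> c j \<le> n - 1"
    using bound i k ak unfolding c_def by force
  then have "sum c {..<h} \<le> h * (n - 1)"
    using sum_bounded_above[of "{..<h}" c "n - 1"] by simp
  moreover have "sum c {..<h} = (\<Sum>j<h. a j) + 1 + (n - 1)"
    unfolding c_def using i k by (simp add: sum.distrib)
  moreover have "h * (n - 1) = (h - 1) * (n - 1) + (n - 1)"
    using i by (cases h) auto
  ultimately show False using sum_a by arith
qed

lemma incr_except_mem_mu_tuples:
  assumes i: "i < h" and b: "b \<in> mu_tuples h (n - 1)"
  shows "incr_except h i b \<in> mu_tuples h n" and "incr_except h i b i < n - 1"
proof -
  from b have bound: "\<forall>k<h. b k < n - 1" and zero: "\<forall>k\<ge>h. b k = 0"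
    and sum_b: "(\<Sum>k<h. b k) = (h - 1) * (n - 1 - 1)"
    by (auto simp: mem_mu_tuples_iff)
  have n: "n - 1 = Suc (n - 1 - 1)" using bound i by force
  have "(\<Sum>k<h. incr_except h i b k) = (h - 1) * (n - 1)"
    using n by (simp add: sum_incr_except[OF i] sum_b)
  then show "incr_except h i b \<in> mu_tuples h n"
    using bound zero n by (auto simp: mem_mu_tuples_iff incr_except_def)
  show "incr_except h i b i < n - 1"
    using bound i by (simp add: incr_except_def)
qed

lemma mem_image_incr_except:
  assumes i: "i < h" and a: "a \<in> mu_tuples h n" and ai: "a i < n - 1"
  shows "a \<in> incr_except h i ` mu_tuples h (n - 1)"
proof -
  from a have bound: "\<forall>k<h. a k < n" and zero: "\<forall>k\<ge>h. a k = 0"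
    and sum_a: "(\<Sum>k<h. a k) = (h - 1) * (n - 1)"
    by (auto simp: mem_mu_tuples_iff)
  have pos: "\<And>k. k < h \<Longrightarrow> k \<noteq> i \<Longrightarrow> a k \<ge> 1"
    using mu_tuples_other_coords_pos[OF a i ai] by blast
  define b where "b k = (if k < h \<and> k \<noteq> i then a k - 1 else a k)" for k
  have a_eq: "incr_except h i b = a"
    using pos by (intro ext) (simp add: incr_except_def b_def Suc_pred' less_eq_Suc_le)
  have n: "n - 1 = Suc (n - 1 - 1)" using ai by simp
  have "(\<Sum>k<h. b k) + (h - 1) = (h - 1) * (n - 1 - 1) + (h - 1)"
    using sum_incr_except[OF i, of b] a_eq sum_a n by (metis mult_Suc_right add.commute)
  then have "b \<in> mu_tuples h (n - 1)"
    using bound zero ai pos by (force simp: mem_mu_tuples_iff b_def)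
  then show ?thesis using a_eq by blast
qed

lemma image_incr_except_mu_tuples:
  assumes "i < h"
  shows "incr_except h i ` mu_tuples h (n - 1) = {a \<in> mu_tuples h n. a i < n - 1}"
  using incr_except_mem_mu_tuples[OF assms] mem_image_incr_except[OF assms] by blast

section \<open>The recursion for \<open>\<mu>\<^sub>n\<close>\<close>

lemma univ_pi_pow_Suc: "univ_pi_pow h q pe u (Suc m) x = univ_pi h q pe u (univ_pi_pow h q pe u m x)"
  unfolding univ_pi_pow_def by simp

lemma univ_pi_pow_Suc_right:
  "univ_pi_pow h q pe u (Suc m) x = univ_pi_pow h q pe u m (univ_pi h q pe u x)"
  unfolding univ_pi_pow_def by (simp add: funpow_Suc_right del: funpow.simps)

lemma lt_pi_pow_Suc_right: "lt_pi_pow h q pe (Suc m) x = lt_pi_pow h q pe m (lt_pi h q pe x)"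
  unfolding lt_pi_pow_def by (simp add: funpow_Suc_right del: funpow.simps)

lemma mu_n_0:
  assumes "h \<ge> 1"
  shows "mu_n h q pe u 0 X = 0"
  unfolding mu_n_def mu_tuples_0[OF assms] by simp

lemma sum_mu_tuples_cofactor_shift:
  fixes X :: "nat \<Rightarrow> 'a::comm_ring_1"
  assumes i: "i < h" and torsion: "univ_pi_pow h q pe u n (X i) = 0"
  defines "P \<equiv> univ_pi_pow h q pe u" and "F \<equiv> univ_pi h q pe u"
  shows "(\<Sum>a\<in>mu_tuples h n. P (Suc (a i)) (X i) * moore_minor h q i (\<lambda>k. P (a k) (X k)))
       = (\<Sum>b\<in>mu_tuples h (n - 1). P (b i) (F (X i)) * moore_minor h q i (\<lambda>k. P (b k) (F (X k))))"
    (is "sum ?t _ = sum ?r _")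
proof -
  have "sum ?t (mu_tuples h n) = sum ?t {a \<in> mu_tuples h n. a i < n - 1}"
  proof (rule sum.mono_neutral_right[OF finite_mu_tuples])
    show "\<forall>a\<in>mu_tuples h n - {a \<in> mu_tuples h n. a i < n - 1}. ?t a = 0"
    proof
      fix a assume "a \<in> mu_tuples h n - {a \<in> mu_tuples h n. a i < n - 1}"
      then have "Suc (a i) = n" using i by (auto simp: mem_mu_tuples_iff)
      then show "?t a = 0" using torsion by (simp add: P_def)
    qed
  qed auto
  also have "\<dots> = sum ?t (incr_except h i ` mu_tuples h (n - 1))"
    by (simp only: image_incr_except_mu_tuples[OF i])
  also have "\<dots> = sum (?t \<circ> incr_except h i) (mu_tuples h (n - 1))"
    by (rule sum.reindex[OF inj_on_subset[OF inj_incr_except subset_UNIV]])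
  also have "\<dots> = sum ?r (mu_tuples h (n - 1))"
  proof (rule sum.cong[OF refl])
    fix b
    have "moore_minor h q i (\<lambda>k. P (incr_except h i b k) (X k)) = moore_minor h q i (\<lambda>k. P (b k) (F (X k)))"
      by (rule moore_minor_cong[OF i]) (simp add: incr_except_def P_def F_def univ_pi_pow_Suc_right)
    then show "(?t \<circ> incr_except h i) b = ?r b"
      by (simp add: incr_except_def P_def F_def univ_pi_pow_Suc_right)
  qed
  finally show ?thesis .
qed

lemma lt_pi_mu_n:
  fixes X :: "nat \<Rightarrow> 'a::comm_ring_1"
  assumes char: "prime CHAR('a)" "q = CHAR('a) ^ f" and h: "h \<ge> 1"
    and torsion: "\<forall>i<h. univ_pi_pow h q pe u n (X i) = 0"
  shows "lt_pi h q pe (mu_n h q pe u n X) = mu_n h q pe u (n - 1) (\<lambda>i. univ_pi h q pe u (X i))"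
proof -
  let ?P = "univ_pi_pow h q pe u" and ?F = "univ_pi h q pe u"
  let ?c = "\<lambda>i Y. (-1) ^ i * moore_minor h q i Y :: 'a"
  have "lt_pi h q pe (mu_n h q pe u n X)
      = (\<Sum>a\<in>mu_tuples h n. \<Sum>i<h. ?P (Suc (a i)) (X i) * ?c i (\<lambda>k. ?P (a k) (X k)))"
    unfolding mu_n_def lt_pi_sum[OF char]
    by (simp add: lt_pi_moore[OF char h, where u = u] moore_with_first_column_expansion[OF h] univ_pi_pow_Suc)
  also have "\<dots> = (\<Sum>i<h. (-1) ^ i *
      (\<Sum>a\<in>mu_tuples h n. ?P (Suc (a i)) (X i) * moore_minor h q i (\<lambda>k. ?P (a k) (X k))))"
    by (subst sum.swap) (simp add: sum_distrib_left mult.left_commute)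
  also have "\<dots> = (\<Sum>i<h. (-1) ^ i *
      (\<Sum>b\<in>mu_tuples h (n - 1). ?P (b i) (?F (X i)) * moore_minor h q i (\<lambda>k. ?P (b k) (?F (X k)))))"
    using torsion by (simp add: sum_mu_tuples_cofactor_shift)
  also have "\<dots> = mu_n h q pe u (n - 1) (\<lambda>i. ?F (X i))"
    unfolding mu_n_def moore_eq_moore_with_first_column moore_with_first_column_expansion[OF h]
    by (subst sum.swap) (simp add: sum_distrib_left mult.left_commute)
  finally show ?thesis .
qed

lemma lt_pi_pow_mu_n_eq_0:
  fixes X :: "nat \<Rightarrow> 'a::comm_ring_1"
  assumes char: "prime CHAR('a)" "q = CHAR('a) ^ f" and h: "h \<ge> 1"
    and torsion: "\<forall>i<h. univ_pi_pow h q pe u n (X i) = 0"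
  shows "lt_pi_pow h q pe n (mu_n h q pe u n X) = 0"
  using torsion
proof (induction n arbitrary: X)
  case 0
  then show ?case by (simp add: mu_n_0[OF h] lt_pi_pow_def)
next
  case (Suc n)
  then have "\<forall>i<h. univ_pi_pow h q pe u n (univ_pi h q pe u (X i)) = 0"
    by (simp add: univ_pi_pow_Suc_right)
  then show ?case
    using Suc.IH by (simp add: lt_pi_pow_Suc_right lt_pi_mu_n[OF char h Suc.prems])
qed

theorem proposition3p7:
  fixes R_pi :: "'a::comm_ring_1" and u :: "nat \<Rightarrow> 'a" and X :: "nat \<Rightarrow> 'a"
    and h n p f q :: nat
  assumes "prime p" and "CHAR('a) = p" and "f \<ge> 1" and "q = p ^ f"
    and "h \<ge> 1" and "n \<ge> 1"
    and "\<forall>i<h. univ_pi_pow h q R_pi u n (X i) = 0"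
  shows "lt_pi h q R_pi (mu_n h q R_pi u n X)
           = mu_n h q R_pi u (n - 1) (\<lambda>i. univ_pi h q R_pi u (X i))
       \<and> lt_pi_pow h q R_pi n (mu_n h q R_pi u n X) = 0"
proof -
  have char: "prime CHAR('a)" "q = CHAR('a) ^ f" using assms by auto
  show ?thesis
    using lt_pi_mu_n[OF char assms(5,7)] lt_pi_pow_mu_n_eq_0[OF char assms(5,7)] by simp
qed

end
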